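(* Let $k$ be a field of characteristic zero and $T$ transcendental over $k$. Let $\mathcal{E}_0$ be the elliptic curve over $k(T)$ given by $(T^3+T+1)Y^2=X^3+X+1$, let $P=(T,1)\in\mathcal{E}_0(k(T))$, write $P_m=mP=(X_m,Y_m)$, and for $m\in\mathbb{Z}\setminus\{0\}$ put $\psi_m=X_m/(TY_m)\in k(T)$. For $m,n,r\in\mathbb{Z}\setminus\{0,1,-1\}$ let $$u=\psi_m\psi_n-\psi_r+\tfrac12 T^{-1},\qquad v=\psi_m\psi_n-\psi_r+\tfrac13 T^{-1}.$$ Let $\operatorname{ord}_T$ and $\operatorname{ord}_{T^{-1}}$ be the discrete valuations of $k(T)$ at $T$ and at $T^{-1}$, normalized with value group $\mathbb{Z}$. Then: (1) $\operatorname{ord}_T(u)=-2$ and $\operatorname{ord}_T(v)=-2$; (2) $nm=r$ if and only if ($\operatorname{ord}_{T^{-1}}(u)=1$ or $\operatorname{ord}_{T^{-1}}(v)=1$), and $nm\neq r$ if and only if ($\operatorname{ord}_{T^{-1}}(u)=0$ and $\operatorname{ord}_{T^{-1}}(v)=0$). *)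

theory Defs
  imports "HOL-Computational_Algebra.Polynomial" "HOL-Computational_Algebra.Fraction_Field"
begin

definition varT :: "'k::field poly fract" where
  "varT = Fract [:0, 1:] 1"

definition ord_T :: "'k::field poly fract \<Rightarrow> int" where
  "ord_T f = (THE n. \<exists>p q. p \<noteq> 0 \<and> q \<noteq> 0 \<and> f = Fract p q \<and>
                          n = int (order 0 p) - int (order 0 q))"

definition ord_Tinv :: "'k::field poly fract \<Rightarrow> int" where
  "ord_Tinv f = (THE n. \<exists>p q. p \<noteq> 0 \<and> q \<noteq> 0 \<and> f = Fract p q \<and>
                          n = int (degree q) - int (degree p))"

text \<open>Points on the curve  c*Y^2 = X^3 + a*X + b  (projective: Inf is the
  point at infinity, the neutral element).\<close>
datatype 'f ecpt = Inf | Aff 'f 'f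

fun ec_add :: "'f::field \<Rightarrow> 'f \<Rightarrow> 'f ecpt \<Rightarrow> 'f ecpt \<Rightarrow> 'f ecpt" where
  "ec_add c a Inf Q = Q"
| "ec_add c a (Aff x1 y1) Inf = Aff x1 y1"
| "ec_add c a (Aff x1 y1) (Aff x2 y2) =
     (if x1 = x2 \<and> y1 = - y2 then Inf
      else (let l = (if x1 = x2 then (3 * x1^2 + a) / (2 * c * y1)
                     else (y2 - y1) / (x2 - x1));
                x3 = c * l^2 - x1 - x2
            in Aff x3 (l * (x1 - x3) - y1)))"

fun ec_neg :: "'f::field ecpt \<Rightarrow> 'f ecpt" where
  "ec_neg Inf = Inf"
| "ec_neg (Aff x y) = Aff x (- y)"

fun ec_nmul :: "'f::field \<Rightarrow> 'f \<Rightarrow> nat \<Rightarrow> 'f ecpt \<Rightarrow> 'f ecpt" where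
  "ec_nmul c a 0 P = Inf"
| "ec_nmul c a (Suc n) P = ec_add c a P (ec_nmul c a n P)"

definition ec_mul :: "'f::field \<Rightarrow> 'f \<Rightarrow> int \<Rightarrow> 'f ecpt \<Rightarrow> 'f ecpt" where
  "ec_mul c a m P = (if 0 \<le> m then ec_nmul c a (nat m) P
                     else ec_neg (ec_nmul c a (nat (- m)) P))"

definition E0_c :: "'k::field poly fract" where
  "E0_c = varT ^ 3 + varT + 1"

definition Pm :: "int \<Rightarrow> 'k::field poly fract ecpt" where
  "Pm m = ec_mul E0_c 1 m (Aff varT 1)"

text \<open>psi_m = X_m / (T Y_m)  (P_m is affine for m \<noteq> 0 since P has infinite order;
  the value at Inf is an irrelevant default).\<close>
definition psi :: "int \<Rightarrow> 'k::field poly fract" where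
  "psi m = (case Pm m of Aff x y \<Rightarrow> x / (varT * y) | Inf \<Rightarrow> 0)"

end

theory Submission
  imports Defs
begin

text \<open>
  At \<open>T = 0\<close> the curve \<open>E\<^sub>0\<close> reduces to \<open>y\<^sup>2 = x\<^sup>3 + x + 1\<close> over \<open>\<rat>\<close> and \<open>P\<close> to
  \<open>P\<^sub>0 = (0, 1)\<close>. This point has infinite order (torsion would produce a rational root of
  \<open>x\<^sup>3 + x + 1\<close> or of \<open>x\<^sup>4 - 2x\<^sup>2 - 8x + 1\<close>), and \<open>nP\<^sub>0\<close> has nonzero coordinates for
  \<open>n \<ge> 2\<close>. So the coordinates of \<open>P\<^sub>m\<close> are regular at \<open>T = 0\<close> with nonzero values, \<open>T \<psi>\<^sub>m\<close> is a
  unit there, and \<open>u\<close>, \<open>v\<close> have a double pole dominated by \<open>\<psi>\<^sub>m \<psi>\<^sub>n\<close>.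

  At \<open>T = \<infinity>\<close> the chord construction gives \<open>X\<^sub>n / T \<rightarrow> 1/n\<^sup>2\<close> and \<open>Y\<^sub>n \<rightarrow> 1/n\<^sup>3\<close> by induction,
  so \<open>\<psi>\<^sub>m \<rightarrow> m\<close> and \<open>u, v \<rightarrow> mn - r\<close>. If \<open>mn \<noteq> r\<close>, both are units at \<open>\<infinity>\<close>. If \<open>mn = r\<close>,
  then \<open>T (\<psi>\<^sub>m \<psi>\<^sub>n - \<psi>\<^sub>r)\<close> has some value \<open>w\<close> at \<open>\<infinity>\<close>, and \<open>u\<close> (resp. \<open>v\<close>) has a simple zero
  unless \<open>w + 1/2\<close> (resp. \<open>w + 1/3\<close>) vanishes, which cannot happen for both.
\<close>

section \<open>Rational points on \<open>y\<^sup>2 = x\<^sup>3 + x + 1\<close>\<close>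

lemma rat_root_of_monic_int_poly:
  fixes p :: "int poly" and x :: rat
  assumes "lead_coeff p = 1" and "poly (map_poly of_int p) x = 0"
  obtains a where "x = of_int a" and "a dvd coeff p 0" and "poly p a = 0"
proof -
  have "algebraic_int x"
    using assms by (auto simp: algebraic_int_altdef_ipoly)
  then have "x \<in> \<int>"
    by (rule rational_algebraic_int_is_int) (simp add: Rats_def)
  then obtain a where x: "x = of_int a"
    by (elim Ints_cases)
  have "of_int (poly p a) = poly (map_poly of_int p) x"
    by (simp add: x poly_altdef degree_map_poly coeff_map_poly)
  then have root: "poly p a = 0"
    using assms(2) by simp
  obtain c q where "p = pCons c q"
    by (cases p)
  with root have "coeff p 0 = a * (- poly q a)"
    by simp
  then have "a dvd coeff p 0" ..
  with x root show ?thesis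
    using that by blast
qed

lemma cubic_no_rat_root: "(x::rat) ^ 3 + x + 1 \<noteq> 0"
proof
  assume "x ^ 3 + x + 1 = 0"
  then have "poly (map_poly of_int [:1, 1, 0, 1:]) x = 0"
    by (simp add: map_poly_pCons algebra_simps power3_eq_cube)
  then obtain a :: int where "a dvd 1" and "poly [:1, 1, 0, 1:] a = 0"
    using rat_root_of_monic_int_poly[of "[:1, 1, 0, 1:]" x] by auto
  then show False
    by (auto simp: zdvd1_eq abs_if split: if_splits)
qed

lemma quartic_no_rat_root: "(x::rat) ^ 4 - 2 * x ^ 2 - 8 * x + 1 \<noteq> 0"
proof
  assume "x ^ 4 - 2 * x ^ 2 - 8 * x + 1 = 0"
  then have "poly (map_poly of_int [:1, -8, -2, 0, 1:]) x = 0"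
    by (simp add: map_poly_pCons algebra_simps power4_eq_xxxx power2_eq_square)
  then obtain a :: int where "a dvd 1" and "poly [:1, -8, -2, 0, 1:] a = 0"
    using rat_root_of_monic_int_poly[of "[:1, -8, -2, 0, 1:]" x] by auto
  then show False
    by (auto simp: zdvd1_eq abs_if split: if_splits)
qed

lemma ec_add_chord:
  fixes x1 y1 x2 y2 :: "'f::field"
  assumes "x1 \<noteq> x2" and "l = (y2 - y1) / (x2 - x1)" and "x3 = c * l ^ 2 - x1 - x2"
  shows "ec_add c a (Aff x1 y1) (Aff x2 y2) = Aff x3 (l * (x1 - x3) - y1)"
  using assms by (simp add: Let_def)

lemma ec_neg_ec_neg [simp]: "ec_neg (ec_neg R) = R"
  by (cases R) simp_all

text \<open>The reduction of \<open>E\<^sub>0\<close> and of \<open>P = (T, 1)\<close> at \<open>T = 0\<close>.\<close>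
definition on_E0_red :: "rat ecpt \<Rightarrow> bool" where
  "on_E0_red R \<longleftrightarrow> (case R of Inf \<Rightarrow> True | Aff x y \<Rightarrow> y ^ 2 = x ^ 3 + x + 1)"

definition P0 :: "rat ecpt" where
  "P0 = Aff 0 1"

definition P0_mult :: "nat \<Rightarrow> rat ecpt" where
  "P0_mult n = ec_nmul 1 1 n P0"

lemma P0_mult_0 [simp]: "P0_mult 0 = Inf"
  and P0_mult_Suc: "P0_mult (Suc n) = ec_add 1 1 P0 (P0_mult n)"
  and P0_mult_1 [simp]: "P0_mult 1 = P0"
  by (simp_all add: P0_mult_def P0_def)

lemma P0_double: "ec_add 1 1 P0 P0 = Aff (1/4) (-9/8)"
  by (simp add: P0_def Let_def power2_eq_square)

lemma P0_mult_2: "P0_mult 2 = Aff (1/4) (-9/8)"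
  by (metis P0_mult_Suc P0_mult_1 P0_double Suc_1)

lemma P0_add_Aff_0:
  "ec_add 1 1 P0 (Aff 0 1) = Aff (1/4) (-9/8)" "ec_add 1 1 P0 (Aff 0 (-1)) = Inf"
  using P0_double by (simp_all add: P0_def)

lemma on_E0_red_Inf [simp]: "on_E0_red Inf"
  by (simp add: on_E0_red_def)

lemma on_E0_red_Aff_0: "on_E0_red (Aff 0 y) \<longleftrightarrow> y = 1 \<or> y = -1"
  by (simp add: on_E0_red_def power2_eq_1_iff)

lemma P0_add_chord:
  assumes "x \<noteq> 0" and "l = (y - 1) / x"
  shows "ec_add 1 1 P0 (Aff x y) = Aff (l ^ 2 - x) (- l * (l ^ 2 - x) - 1)"
proof -
  have "ec_add 1 1 (Aff 0 1) (Aff x y) = Aff (l ^ 2 - x) (l * (0 - (l ^ 2 - x)) - 1)"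
    by (rule ec_add_chord) (use assms in simp_all)
  then show ?thesis
    by (simp add: P0_def algebra_simps del: ec_add.simps)
qed

text \<open>The line \<open>y = l x + 1\<close> through \<open>P\<^sub>0\<close> meets the curve where \<open>(l x + 1)\<^sup>2 = x\<^sup>3 + x + 1\<close>;
  dividing out the root \<open>x = 0\<close> of \<open>P\<^sub>0\<close> leaves a quadratic in \<open>x\<close>, whose other root \<open>l\<^sup>2 - x\<close> is
  the abscissa of the third intersection point.\<close>
lemma P0_chord_quadratic:
  assumes "on_E0_red (Aff x y)" and "x \<noteq> 0" and "l = (y - 1) / x"
  shows "x ^ 2 - l ^ 2 * x + 1 - 2 * l = 0"
proof -
  have y: "y = l * x + 1"
    using assms(2,3) by simp
  have "x * (x ^ 2 - l ^ 2 * x + 1 - 2 * l) = 0"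
    using assms(1) unfolding on_E0_red_def y
    by (simp add: algebra_simps power2_eq_square power3_eq_cube)
  with assms(2) show ?thesis
    by simp
qed

lemma on_E0_red_add_P0:
  assumes "on_E0_red R"
  shows "on_E0_red (ec_add 1 1 P0 R)"
proof (cases R)
  case Inf
  then show ?thesis by (simp add: P0_def on_E0_red_def)
next
  case (Aff x y)
  show ?thesis
  proof (cases "x = 0")
    case True
    with assms Aff have "y = 1 \<or> y = -1"
      by (simp add: on_E0_red_Aff_0)
    with Aff True show ?thesis
      by (auto simp: P0_add_Aff_0 on_E0_red_def power2_eq_square power3_eq_cube)
  next
    case False
    define l where "l = (y - 1) / x"
    define z where "z = l ^ 2 - x"
    have "z ^ 2 - l ^ 2 * z + 1 - 2 * l = 0"
      using P0_chord_quadratic[OF assms[unfolded Aff] False l_def]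
      by (simp add: z_def algebra_simps power2_eq_square)
    moreover have "(- l * z - 1) ^ 2 - (z ^ 3 + z + 1) = - z * (z ^ 2 - l ^ 2 * z + 1 - 2 * l)"
      by (simp add: algebra_simps power2_eq_square power3_eq_cube)
    ultimately have "(- l * (l ^ 2 - x) - 1) ^ 2 = (l ^ 2 - x) ^ 3 + (l ^ 2 - x) + 1"
      by (simp add: z_def)
    with False Aff show ?thesis
      by (simp add: P0_add_chord[OF False l_def] on_E0_red_def)
  qed
qed

lemma P0_add_eq_neg_P0:
  assumes "on_E0_red (Aff x y)" and "x \<noteq> 0" and "ec_add 1 1 P0 (Aff x y) = ec_neg P0"
  shows "x = 1/4" and "y = 9/8"
proof -
  define l where "l = (y - 1) / x"
  have y: "y = l * x + 1"
    using assms(2) by (simp add: l_def)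
  have x: "x = l ^ 2"
    using assms(3) P0_add_chord[OF assms(2) l_def] by (simp add: P0_def)
  then have l: "l = 1/2"
    using P0_chord_quadratic[OF assms(1,2) l_def] by simp
  show "x = 1/4" "y = 9/8"
    unfolding y x l by (simp_all add: power2_eq_square)
qed

text \<open>\<open>P\<^sub>0\<close>, \<open>R\<close> and \<open>-(P\<^sub>0 + R)\<close> are collinear. This is the only trace of the group law that
  the argument needs.\<close>
lemma P0_add_neg_P0_add:
  assumes "on_E0_red R"
  shows "ec_add 1 1 P0 (ec_neg (ec_add 1 1 P0 R)) = ec_neg R"
proof (cases R)
  case Inf
  then show ?thesis by (simp add: P0_def)
next
  case (Aff x y)
  show ?thesis
  proof (cases "x = 0")
    case True
    with assms Aff have "y = 1 \<or> y = -1"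
      by (simp add: on_E0_red_Aff_0)
    with Aff True show ?thesis
      by (auto simp: P0_def Let_def power2_eq_square)
  next
    case False
    define l where "l = (y - 1) / x"
    define a where "a = l ^ 2 - x"
    have y: "y = l * x + 1"
      using False by (simp add: l_def)
    have add: "ec_add 1 1 P0 R = Aff a (- l * a - 1)"
      using P0_add_chord[OF False l_def] by (simp add: Aff a_def)
    show ?thesis
    proof (cases "a = 0")
      case True
      then have neg: "ec_add 1 1 P0 R = ec_neg P0"
        unfolding add by (simp add: P0_def)
      then have "x = 1/4" "y = 9/8"
        using P0_add_eq_neg_P0[OF _ False] assms by (simp_all add: Aff)
      then show ?thesis
        unfolding neg ec_neg_ec_neg P0_double by (simp add: Aff)
    next
      case False
      have neg: "ec_neg (ec_add 1 1 P0 R) = Aff a (l * a + 1)"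
        unfolding add by simp
      have "ec_add 1 1 P0 (Aff a (l * a + 1)) = Aff (l ^ 2 - a) (- l * (l ^ 2 - a) - 1)"
        by (rule P0_add_chord) (use False in simp_all)
      also have "\<dots> = ec_neg R"
        by (simp add: Aff a_def y algebra_simps)
      finally show ?thesis
        unfolding neg .
    qed
  qed
qed

lemma P0_add_ne_neg:
  assumes "on_E0_red R"
  shows "ec_add 1 1 P0 R \<noteq> ec_neg R"
proof (cases R)
  case Inf
  then show ?thesis by (simp add: P0_def)
next
  case (Aff x y)
  show ?thesis
  proof (cases "x = 0")
    case True
    with assms Aff have "y = 1 \<or> y = -1"
      by (simp add: on_E0_red_Aff_0)
    with Aff True show ?thesis
      by (auto simp: P0_def Let_def)
  next
    case False
    define l where "l = (y - 1) / x"
    show ?thesis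
    proof
      assume "ec_add 1 1 P0 R = ec_neg R"
      then have "l ^ 2 = 2 * x"
        using P0_add_chord[OF False l_def] by (simp add: Aff)
      then have "x ^ 2 - 2 * x * x + 1 - 2 * l = 0"
        using P0_chord_quadratic[OF assms[unfolded Aff] False l_def] by simp
      then have "2 * l = 1 - x ^ 2"
        by (simp add: algebra_simps power2_eq_square)
      then have "(1 - x ^ 2) ^ 2 = (2 * l) ^ 2"
        by simp
      also have "\<dots> = 8 * x"
        using \<open>l ^ 2 = 2 * x\<close> by (simp add: power_mult_distrib)
      finally have "(1 - x ^ 2) ^ 2 = 8 * x" .
      then have "x ^ 4 - 2 * x ^ 2 - 8 * x + 1 = 0"
        by (simp add: algebra_simps power2_eq_square power4_eq_xxxx)
      with quartic_no_rat_root show False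
        by blast
    qed
  qed
qed

lemma on_E0_red_neg_fixed:
  assumes "on_E0_red R" and "ec_neg R = R"
  shows "R = Inf"
proof (cases R)
  case (Aff x y)
  with assms have "x ^ 3 + x + 1 = 0"
    by (simp add: on_E0_red_def)
  with cubic_no_rat_root show ?thesis
    by blast
qed

lemma on_E0_red_P0_mult: "on_E0_red (P0_mult n)"
  by (induction n) (simp_all add: P0_mult_Suc on_E0_red_add_P0)

lemma P0_add_inj:
  assumes "on_E0_red R" and "on_E0_red R'" and "ec_add 1 1 P0 R = ec_add 1 1 P0 R'"
  shows "R = R'"
  using P0_add_neg_P0_add[OF assms(1)] P0_add_neg_P0_add[OF assms(2)] assms(3)
  by (metis ec_neg_ec_neg)

lemma P0_mult_diff:
  assumes "P0_mult N = Inf" and "k \<le> N"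
  shows "P0_mult (N - k) = ec_neg (P0_mult k)"
  using assms(2)
proof (induction k)
  case 0
  then show ?case using assms(1) by simp
next
  case (Suc k)
  have step: "ec_add 1 1 P0 (P0_mult (N - Suc k)) = ec_neg (P0_mult k)"
    using Suc by (simp flip: P0_mult_Suc add: Suc_diff_Suc)
  have "P0_mult (Suc k) = ec_add 1 1 P0 (ec_neg (ec_add 1 1 P0 (P0_mult (N - Suc k))))"
    unfolding step by (simp add: P0_mult_Suc)
  also have "\<dots> = ec_neg (P0_mult (N - Suc k))"
    by (rule P0_add_neg_P0_add[OF on_E0_red_P0_mult])
  finally show ?case
    by simp
qed

lemma P0_mult_eq_Inf_iff: "P0_mult n = Inf \<longleftrightarrow> n = 0"
proof
  show "P0_mult n = Inf \<Longrightarrow> n = 0"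
  proof (induction n rule: less_induct)
    case (less N)
    obtain M where "N = 2 * M \<or> N = 2 * M + 1"
      by (metis oddE evenE)
    then show "N = 0"
    proof
      assume N: "N = 2 * M"
      have "ec_neg (P0_mult M) = P0_mult M"
        using P0_mult_diff[OF less.prems, of M] N by simp
      then have "P0_mult M = Inf"
        by (rule on_E0_red_neg_fixed[OF on_E0_red_P0_mult])
      with less.IH N show "N = 0"
        by (cases "M = 0") auto
    next
      assume "N = 2 * M + 1"
      then have "ec_add 1 1 P0 (P0_mult M) = ec_neg (P0_mult M)"
        using P0_mult_diff[OF less.prems, of M] by (simp add: P0_mult_Suc)
      with P0_add_ne_neg[OF on_E0_red_P0_mult] show "N = 0"
        by blast
    qed
  qed
qed simp

lemma P0_mult_Aff:
  assumes "n \<ge> 2"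
  obtains x y where "P0_mult n = Aff x y" and "x \<noteq> 0" and "y \<noteq> 0"
proof -
  obtain x y where xy: "P0_mult n = Aff x y"
    using P0_mult_eq_Inf_iff[of n] assms by (cases "P0_mult n") auto
  have curve: "on_E0_red (Aff x y)"
    using on_E0_red_P0_mult[of n] by (simp add: xy)
  then have "y \<noteq> 0"
    using cubic_no_rat_root[of x] by (auto simp: on_E0_red_def)
  moreover have "x \<noteq> 0"
  proof
    assume "x = 0"
    with curve have "y = 1 \<or> y = -1"
      by (simp add: on_E0_red_Aff_0)
    then show False
    proof
      assume "y = 1"
      then have "ec_add 1 1 P0 (P0_mult (n - 1)) = ec_add 1 1 P0 (P0_mult 0)"
        using xy \<open>x = 0\<close> assms P0_mult_Suc[of "n - 1"] by (simp add: P0_def)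
      then have "P0_mult (n - 1) = P0_mult 0"
        by (rule P0_add_inj[OF on_E0_red_P0_mult on_E0_red_P0_mult])
      with assms P0_mult_eq_Inf_iff show False
        by simp
    next
      assume "y = -1"
      then have "P0_mult (Suc n) = Inf"
        using xy \<open>x = 0\<close> by (simp add: P0_mult_Suc P0_def)
      with P0_mult_eq_Inf_iff show False
        by blast
    qed
  qed
  ultimately show ?thesis
    using that xy by blast
qed

section \<open>Values and valuations of rational functions\<close>

definition has_value_at :: "'k::field \<Rightarrow> 'k poly fract \<Rightarrow> 'k \<Rightarrow> bool" where
  "has_value_at z f v \<longleftrightarrow> (\<exists>p q. poly q z \<noteq> 0 \<and> f = Fract p q \<and> v = poly p z / poly q z)"

lemma has_value_atE:
  assumes "has_value_at z f v"
  obtains p q where "poly q z \<noteq> 0" and "f = Fract p q" and "v = poly p z / poly q z"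
  using assms by (auto simp: has_value_at_def)

lemma has_value_at_Fract: "poly q z \<noteq> 0 \<Longrightarrow> has_value_at z (Fract p q) (poly p z / poly q z)"
  unfolding has_value_at_def by blast

lemma has_value_at_add:
  assumes "has_value_at z f v" and "has_value_at z g w"
  shows "has_value_at z (f + g) (v + w)"
proof -
  obtain p q where f: "poly q z \<noteq> 0" "f = Fract p q" "v = poly p z / poly q z"
    using assms(1) by (rule has_value_atE)
  obtain p' q' where g: "poly q' z \<noteq> 0" "g = Fract p' q'" "w = poly p' z / poly q' z"
    using assms(2) by (rule has_value_atE)
  have "q \<noteq> 0" "q' \<noteq> 0"
    using f g by auto
  then have "f + g = Fract (p * q' + p' * q) (q * q')"
    using f g by simp
  moreover have "v + w = poly (p * q' + p' * q) z / poly (q * q') z"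
    unfolding f(3) g(3) using f(1) g(1) by (simp add: field_simps)
  moreover have "has_value_at z (Fract (p * q' + p' * q) (q * q'))
      (poly (p * q' + p' * q) z / poly (q * q') z)"
    by (rule has_value_at_Fract) (use f g in simp)
  ultimately show ?thesis
    by simp
qed

lemma has_value_at_mult:
  assumes "has_value_at z f v" and "has_value_at z g w"
  shows "has_value_at z (f * g) (v * w)"
proof -
  obtain p q where f: "poly q z \<noteq> 0" "f = Fract p q" "v = poly p z / poly q z"
    using assms(1) by (rule has_value_atE)
  obtain p' q' where g: "poly q' z \<noteq> 0" "g = Fract p' q'" "w = poly p' z / poly q' z"
    using assms(2) by (rule has_value_atE)
  show ?thesis
    using f g has_value_at_Fract[of "q * q'" z "p * p'"] by simp
qed

lemma has_value_at_uminus: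
  assumes "has_value_at z f v"
  shows "has_value_at z (- f) (- v)"
proof -
  obtain p q where f: "poly q z \<noteq> 0" "f = Fract p q" "v = poly p z / poly q z"
    using assms by (rule has_value_atE)
  then show ?thesis
    using has_value_at_Fract[of q z "- p"] by simp
qed

lemma has_value_at_diff:
  "has_value_at z f v \<Longrightarrow> has_value_at z g w \<Longrightarrow> has_value_at z (f - g) (v - w)"
  using has_value_at_add[OF _ has_value_at_uminus, of z f v g w] by simp

lemma has_value_at_inverse:
  assumes "has_value_at z f v" and "v \<noteq> 0"
  shows "has_value_at z (inverse f) (inverse v)"
proof -
  obtain p q where f: "poly q z \<noteq> 0" "f = Fract p q" "v = poly p z / poly q z"
    using assms(1) by (rule has_value_atE)
  with assms(2) show ?thesis
    using has_value_at_Fract[of p z q] by simp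
qed

lemma has_value_at_divide:
  "has_value_at z f v \<Longrightarrow> has_value_at z g w \<Longrightarrow> w \<noteq> 0 \<Longrightarrow> has_value_at z (f / g) (v / w)"
  using has_value_at_mult[OF _ has_value_at_inverse, of z f v g w] by (simp add: divide_inverse)

lemma has_value_at_one: "has_value_at z 1 1"
  using has_value_at_Fract[of 1 z 1] by (simp add: One_fract_def)

lemma has_value_at_numeral: "has_value_at z (numeral n) (numeral n)"
  using has_value_at_Fract[of 1 z "numeral n"] by (simp add: of_nat_fract[of "numeral n", simplified])

lemma has_value_at_power: "has_value_at z f v \<Longrightarrow> has_value_at z (f ^ n) (v ^ n)"
  by (induction n) (simp_all add: has_value_at_one has_value_at_mult)

lemma has_value_at_varT: "has_value_at z varT z"
  unfolding varT_def using has_value_at_Fract[of 1 z "[:0, 1:]"] by simp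

lemmas has_value_at_intros = has_value_at_add has_value_at_mult has_value_at_diff
  has_value_at_uminus has_value_at_divide has_value_at_power has_value_at_numeral
  has_value_at_one has_value_at_varT

lemma has_value_at_nonzero:
  assumes "has_value_at z f v" and "v \<noteq> 0"
  shows "f \<noteq> 0"
proof -
  obtain p q where "poly q z \<noteq> 0" "f = Fract p q" "v = poly p z / poly q z"
    using assms(1) by (rule has_value_atE)
  moreover from this assms(2) have "p \<noteq> 0" "q \<noteq> 0"
    by auto
  ultimately show ?thesis
    by (simp add: eq_fract Zero_fract_def)
qed

lemma numeral_fract_poly_nonzero [simp]: "(numeral n :: 'k::field_char_0 poly fract) \<noteq> 0"
  using has_value_at_numeral[of 0 n] by (rule has_value_at_nonzero) simp

lemma coeff_mult_degree_le:
  fixes p q :: "'a::comm_semiring_1 poly"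
  assumes "degree p \<le> m" and "degree q \<le> n"
  shows "coeff (p * q) (m + n) = coeff p m * coeff q n"
proof (cases "degree p = m \<and> degree q = n")
  case True
  then show ?thesis
    using coeff_mult_degree_sum by blast
next
  case False
  with assms have "degree p < m \<or> degree q < n"
    by linarith
  moreover have "degree (p * q) < m + n"
    using degree_mult_le[of p q] assms calculation by linarith
  ultimately show ?thesis
    by (auto simp: coeff_eq_0)
qed

definition has_value_at_infinity :: "'k::field poly fract \<Rightarrow> 'k \<Rightarrow> bool" where
  "has_value_at_infinity f v \<longleftrightarrow>
     (\<exists>p q. q \<noteq> 0 \<and> degree p \<le> degree q \<and> f = Fract p q \<and> v = coeff p (degree q) / lead_coeff q)"

lemma has_value_at_infinityE:
  assumes "has_value_at_infinity f v"
  obtains p q where "q \<noteq> 0" and "degree p \<le> degree q" and "f = Fract p q"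
    and "v = coeff p (degree q) / lead_coeff q"
  using assms by (auto simp: has_value_at_infinity_def)

lemma has_value_at_infinity_Fract:
  "q \<noteq> 0 \<Longrightarrow> degree p \<le> degree q \<Longrightarrow>
     has_value_at_infinity (Fract p q) (coeff p (degree q) / lead_coeff q)"
  unfolding has_value_at_infinity_def by blast

lemma has_value_at_infinity_nonzeroE:
  assumes "has_value_at_infinity f v" and "v \<noteq> 0"
  obtains p q where "p \<noteq> 0" and "q \<noteq> 0" and "degree p = degree q" and "f = Fract p q"
    and "v = lead_coeff p / lead_coeff q"
proof -
  obtain p q where f: "q \<noteq> 0" "degree p \<le> degree q" "f = Fract p q"
    "v = coeff p (degree q) / lead_coeff q"
    using assms(1) by (rule has_value_at_infinityE)
  with assms(2) have "coeff p (degree q) \<noteq> 0"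
    by auto
  then have "p \<noteq> 0" "degree q \<le> degree p"
    by (auto intro: le_degree)
  with f that show ?thesis
    by simp
qed

lemma has_value_at_infinity_add:
  assumes "has_value_at_infinity f v" and "has_value_at_infinity g w"
  shows "has_value_at_infinity (f + g) (v + w)"
proof -
  obtain p q where f: "q \<noteq> 0" "degree p \<le> degree q" "f = Fract p q"
    "v = coeff p (degree q) / lead_coeff q"
    using assms(1) by (rule has_value_at_infinityE)
  obtain p' q' where g: "q' \<noteq> 0" "degree p' \<le> degree q'" "g = Fract p' q'"
    "w = coeff p' (degree q') / lead_coeff q'"
    using assms(2) by (rule has_value_at_infinityE)
  have fg: "f + g = Fract (p * q' + p' * q) (q * q')"
    using f g by simp
  have deg: "degree (q * q') = degree q + degree q'"
    using f g by (simp add: degree_mult_eq)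
  have deg_le: "degree (p * q' + p' * q) \<le> degree (q * q')"
    unfolding deg using degree_mult_le[of p q'] degree_mult_le[of p' q] f g
    by (intro degree_add_le) linarith+
  have c1: "coeff (p * q') (degree q + degree q') = coeff p (degree q) * lead_coeff q'"
    by (rule coeff_mult_degree_le) (use f in simp_all)
  have c2: "coeff (p' * q) (degree q + degree q') = coeff p' (degree q') * lead_coeff q"
    by (subst add.commute, rule coeff_mult_degree_le) (use g in simp_all)
  have vw: "v + w = coeff (p * q' + p' * q) (degree (q * q')) / lead_coeff (q * q')"
    unfolding f(4) g(4) deg coeff_add c1 c2 coeff_mult_degree_sum
    using f(1) g(1) by (simp add: field_simps)
  show ?thesis
    unfolding fg vw by (rule has_value_at_infinity_Fract) (use f g deg_le in simp_all)
qed

lemma has_value_at_infinity_mult: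
  assumes "has_value_at_infinity f v" and "has_value_at_infinity g w"
  shows "has_value_at_infinity (f * g) (v * w)"
proof -
  obtain p q where f: "q \<noteq> 0" "degree p \<le> degree q" "f = Fract p q"
    "v = coeff p (degree q) / lead_coeff q"
    using assms(1) by (rule has_value_at_infinityE)
  obtain p' q' where g: "q' \<noteq> 0" "degree p' \<le> degree q'" "g = Fract p' q'"
    "w = coeff p' (degree q') / lead_coeff q'"
    using assms(2) by (rule has_value_at_infinityE)
  have deg: "degree (q * q') = degree q + degree q'"
    using f g by (simp add: degree_mult_eq)
  have "degree (p * p') \<le> degree (q * q')"
    unfolding deg using degree_mult_le[of p p'] f g by linarith
  moreover have "v * w = coeff (p * p') (degree (q * q')) / lead_coeff (q * q')"
    using f g coeff_mult_degree_le[of p "degree q" p' "degree q'"]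
    by (simp add: deg coeff_mult_degree_sum)
  ultimately show ?thesis
    using has_value_at_infinity_Fract[of "q * q'"] f g by simp
qed

lemma has_value_at_infinity_uminus:
  assumes "has_value_at_infinity f v"
  shows "has_value_at_infinity (- f) (- v)"
proof -
  obtain p q where f: "q \<noteq> 0" "degree p \<le> degree q" "f = Fract p q"
    "v = coeff p (degree q) / lead_coeff q"
    using assms by (rule has_value_at_infinityE)
  then show ?thesis
    using has_value_at_infinity_Fract[of q "- p"] by simp
qed

lemma has_value_at_infinity_diff:
  "has_value_at_infinity f v \<Longrightarrow> has_value_at_infinity g w \<Longrightarrow> has_value_at_infinity (f - g) (v - w)"
  using has_value_at_infinity_add[OF _ has_value_at_infinity_uminus, of f v g w] by simp

lemma has_value_at_infinity_inverse:
  assumes "has_value_at_infinity f v" and "v \<noteq> 0"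
  shows "has_value_at_infinity (inverse f) (inverse v)"
proof -
  obtain p q where f: "p \<noteq> 0" "q \<noteq> 0" "degree p = degree q" "f = Fract p q"
    "v = lead_coeff p / lead_coeff q"
    using assms by (rule has_value_at_infinity_nonzeroE)
  then show ?thesis
    using has_value_at_infinity_Fract[of p q] by simp
qed

lemma has_value_at_infinity_divide:
  "has_value_at_infinity f v \<Longrightarrow> has_value_at_infinity g w \<Longrightarrow> w \<noteq> 0 \<Longrightarrow>
     has_value_at_infinity (f / g) (v / w)"
  using has_value_at_infinity_mult[OF _ has_value_at_infinity_inverse, of f v g w]
  by (simp add: divide_inverse)

lemma has_value_at_infinity_one: "has_value_at_infinity 1 1"
  using has_value_at_infinity_Fract[of 1 1] by (simp add: One_fract_def)

lemma has_value_at_infinity_numeral: "has_value_at_infinity (numeral n) (numeral n :: 'k::field)"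
proof -
  have "Fract (numeral n) 1 = (numeral n :: 'k poly fract)"
    using of_nat_fract[of "numeral n"] by simp
  moreover have "coeff (numeral n :: 'k poly) 0 = numeral n"
    by (subst numeral_poly) simp
  moreover have "has_value_at_infinity (Fract (numeral n) 1) (coeff (numeral n :: 'k poly) 0)"
    using has_value_at_infinity_Fract[of 1 "numeral n"] by simp
  ultimately show ?thesis
    by (simp only:)
qed

lemma has_value_at_infinity_power:
  "has_value_at_infinity f v \<Longrightarrow> has_value_at_infinity (f ^ n) (v ^ n)"
  by (induction n) (simp_all add: has_value_at_infinity_one has_value_at_infinity_mult)

lemma has_value_at_infinity_inverse_varT: "has_value_at_infinity (inverse varT) 0"
  unfolding varT_def using has_value_at_infinity_Fract[of "[:0, 1:]" 1] by simp

lemma has_value_at_infinity_varT_mult: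
  assumes "has_value_at_infinity f 0"
  obtains w where "has_value_at_infinity (varT * f) w"
proof -
  obtain p q where f: "q \<noteq> 0" "degree p \<le> degree q" "f = Fract p q" "coeff p (degree q) = 0"
    using assms by (auto elim: has_value_at_infinityE)
  have "degree ([:0, 1:] * p) \<le> degree q"
  proof (cases "p = 0")
    case False
    with f have "degree p < degree q"
      by (metis le_neq_implies_less leading_coeff_0_iff)
    with False show ?thesis
      by (simp add: degree_mult_eq)
  qed simp
  moreover have "varT * f = Fract ([:0, 1:] * p) q"
    using f by (simp add: varT_def)
  ultimately show ?thesis
    using f has_value_at_infinity_Fract that by metis
qed

lemmas has_value_at_infinity_intros = has_value_at_infinity_add has_value_at_infinity_mult
  has_value_at_infinity_diff has_value_at_infinity_uminus has_value_at_infinity_divide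
  has_value_at_infinity_power has_value_at_infinity_numeral has_value_at_infinity_one
  has_value_at_infinity_inverse_varT

lemma has_value_at_infinity_nonzero:
  assumes "has_value_at_infinity f v" and "v \<noteq> 0"
  shows "f \<noteq> 0"
proof -
  obtain p q where "p \<noteq> 0" "q \<noteq> 0" "f = Fract p q"
    using assms by (rule has_value_at_infinity_nonzeroE)
  then show ?thesis
    by (simp add: eq_fract Zero_fract_def)
qed

lemma ord_T_Fract:
  assumes "p \<noteq> 0" and "q \<noteq> 0"
  shows "ord_T (Fract p q) = int (order 0 p) - int (order 0 q)"
  unfolding ord_T_def
proof (rule the_equality)
  fix n
  assume "\<exists>p' q'. p' \<noteq> 0 \<and> q' \<noteq> 0 \<and> Fract p q = Fract p' q' \<and>
    n = int (order 0 p') - int (order 0 q')"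
  then obtain p' q' where pq': "p' \<noteq> 0" "q' \<noteq> 0" "Fract p q = Fract p' q'"
    and n: "n = int (order 0 p') - int (order 0 q')"
    by blast
  then have "p * q' = p' * q"
    using assms by (simp add: eq_fract)
  then have "order 0 p + order 0 q' = order 0 p' + order 0 q"
    using assms pq' by (metis order_mult mult_eq_0_iff)
  then show "n = int (order 0 p) - int (order 0 q)"
    unfolding n by linarith
qed (use assms in blast)

lemma ord_Tinv_Fract:
  assumes "p \<noteq> 0" and "q \<noteq> 0"
  shows "ord_Tinv (Fract p q) = int (degree q) - int (degree p)"
  unfolding ord_Tinv_def
proof (rule the_equality)
  fix n
  assume "\<exists>p' q'. p' \<noteq> 0 \<and> q' \<noteq> 0 \<and> Fract p q = Fract p' q' \<and>
    n = int (degree q') - int (degree p')"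
  then obtain p' q' where pq': "p' \<noteq> 0" "q' \<noteq> 0" "Fract p q = Fract p' q'"
    and n: "n = int (degree q') - int (degree p')"
    by blast
  then have "p * q' = p' * q"
    using assms by (simp add: eq_fract)
  then have "degree p + degree q' = degree p' + degree q"
    using assms pq' by (metis degree_mult_eq)
  then show "n = int (degree q) - int (degree p)"
    unfolding n by linarith
qed (use assms in blast)

lemma varT_power: "varT ^ k = Fract ([:0, 1:] ^ k) 1"
  by (induction k) (simp_all add: varT_def One_fract_def)

lemma varT_nonzero [simp]: "varT \<noteq> 0"
  by (simp add: varT_def eq_fract Zero_fract_def)

lemma ord_T_divide_varT_power:
  assumes "has_value_at 0 g w" and "w \<noteq> 0"
  shows "ord_T (g / varT ^ k) = - int k"
proof -
  obtain p q where g: "poly q 0 \<noteq> 0" "g = Fract p q" "w = poly p 0 / poly q 0"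
    using assms(1) by (rule has_value_atE)
  with assms(2) have "poly p 0 \<noteq> 0"
    by auto
  have "order 0 ([:0, 1:] ^ k :: 'a poly) = k"
    using order_power_n_n[of "0 :: 'a" k] by simp
  moreover have nz: "q * [:0, 1:] ^ k \<noteq> 0" "p \<noteq> 0"
    using g \<open>poly p 0 \<noteq> 0\<close> by auto
  ultimately have "order 0 (q * [:0, 1:] ^ k) = k" "order 0 p = 0"
    using g(1) \<open>poly p 0 \<noteq> 0\<close> by (simp_all add: order_mult order_0I)
  moreover have "g / varT ^ k = Fract p (q * [:0, 1:] ^ k)"
    using g by (simp add: varT_power)
  ultimately show ?thesis
    using nz by (simp add: ord_T_Fract)
qed

lemma ord_Tinv_divide_varT_power:
  assumes "has_value_at_infinity g w" and "w \<noteq> 0"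
  shows "ord_Tinv (g / varT ^ k) = int k"
proof -
  obtain p q where g: "p \<noteq> 0" "q \<noteq> 0" "degree p = degree q" "g = Fract p q"
    using assms by (rule has_value_at_infinity_nonzeroE)
  then have "g / varT ^ k = Fract p (q * [:0, 1:] ^ k)"
    by (simp add: varT_power)
  moreover have "degree (q * [:0, 1:] ^ k) = degree q + k"
    using g by (simp add: degree_mult_eq degree_power_eq)
  ultimately show ?thesis
    using g by (simp add: ord_Tinv_Fract)
qed

section \<open>The multiples of \<open>P\<close>\<close>

lemma E0_c_value_at_0: "has_value_at 0 E0_c 1"
proof -
  have "has_value_at 0 E0_c (0 ^ 3 + 0 + 1)"
    unfolding E0_c_def by (intro has_value_at_intros)
  then show ?thesis
    by simp
qed

lemma E0_c_value_at_infinity: "has_value_at_infinity (E0_c / varT ^ 3 :: 'k::field poly fract) 1"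
proof -
  have "(E0_c :: 'k poly fract) / varT ^ 3 = 1 + inverse varT ^ 2 + inverse varT ^ 3"
    unfolding E0_c_def by (simp add: field_simps eval_nat_numeral)
  moreover have "has_value_at_infinity (1 + inverse varT ^ 2 + inverse varT ^ 3) (1 + 0 ^ 2 + 0 ^ 3)"
    by (intro has_value_at_infinity_intros)
  ultimately show ?thesis
    by simp
qed

definition E0_mult :: "nat \<Rightarrow> 'k::field poly fract ecpt" where
  "E0_mult n = ec_nmul E0_c 1 n (Aff varT 1)"

lemma E0_mult_Suc: "E0_mult (Suc n) = ec_add E0_c 1 (Aff varT 1) (E0_mult n)"
  by (simp add: E0_mult_def)

text \<open>If \<open>(X / T, Y) \<rightarrow> (t\<^sup>2, t\<^sup>3)\<close> at \<open>T = \<infinity>\<close>, then \<open>T\<close> times the slope of the chord from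
  \<open>P = (T, 1)\<close> to \<open>(X, Y)\<close> tends to \<open>(t\<^sup>3 - 1) / (t\<^sup>2 - 1)\<close>; these identities show that the third
  intersection point has the same shape with \<open>t\<close> replaced by \<open>t / (t + 1)\<close>, i.e. \<open>1/n\<close> by
  \<open>1/(n + 1)\<close>.\<close>
lemma chord_slope_identities:
  fixes t :: "'a::field"
  assumes "t \<noteq> 1" and "t + 1 \<noteq> 0"
  defines "L \<equiv> (t ^ 2 + t + 1) / (t + 1)" and "t' \<equiv> t / (t + 1)"
  shows "(t ^ 3 - 1) / (t ^ 2 - 1) = L"
    and "L ^ 2 - 1 - t ^ 2 = t' ^ 2"
    and "L * (1 - t' ^ 2) - 1 = t' ^ 3"
proof -
  have "t - 1 \<noteq> 0"
    using assms by simp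
  have "(t ^ 3 - 1) / (t ^ 2 - 1) = ((t - 1) * (t ^ 2 + t + 1)) / ((t - 1) * (t + 1))"
    by (simp add: algebra_simps eval_nat_numeral)
  also have "\<dots> = L"
    unfolding L_def using \<open>t - 1 \<noteq> 0\<close> by (rule mult_divide_mult_cancel_left)
  finally show "(t ^ 3 - 1) / (t ^ 2 - 1) = L" .
  show "L ^ 2 - 1 - t ^ 2 = t' ^ 2"
    unfolding L_def t'_def using assms
    by (simp add: field_simps) (simp add: algebra_simps eval_nat_numeral)
  have "1 - t' ^ 2 = (2 * t + 1) / (t + 1) ^ 2"
    unfolding t'_def using assms by (simp add: field_simps) (simp add: algebra_simps eval_nat_numeral)
  then have "L * (1 - t' ^ 2) = ((t ^ 2 + t + 1) * (2 * t + 1)) / ((t + 1) * (t + 1) ^ 2)"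
    unfolding L_def by simp
  also have "\<dots> = ((t + 1) ^ 3 + t ^ 3) / (t + 1) ^ 3"
    by (simp add: algebra_simps eval_nat_numeral)
  also have "\<dots> = 1 + t' ^ 3"
    unfolding t'_def using assms by (simp add: add_divide_distrib power_divide)
  finally show "L * (1 - t' ^ 2) - 1 = t' ^ 3"
    by simp
qed

lemma E0_add_at_infinity:
  fixes X Y :: "'k::field poly fract" and t :: 'k
  assumes "t \<noteq> 1" and "t + 1 \<noteq> 0"
    and X: "has_value_at_infinity (X / varT) (t ^ 2)" and Y: "has_value_at_infinity Y (t ^ 3)"
  obtains X' Y' where "ec_add E0_c 1 (Aff varT 1) (Aff X Y) = Aff X' Y'"
    and "has_value_at_infinity (X' / varT) ((t / (t + 1)) ^ 2)"
    and "has_value_at_infinity Y' ((t / (t + 1)) ^ 3)"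
proof -
  define a where "a = X / varT"
  define L where "L = (Y - 1) / (a - 1)"
  define X' where "X' = E0_c * (L / varT) ^ 2 - varT - X"
  define Y' where "Y' = L / varT * (varT - X') - 1"
  have "t ^ 2 \<noteq> 1"
    using assms(1,2) by (metis power2_eq_1_iff add_eq_0_iff2)
  have a1: "has_value_at_infinity (a - 1) (t ^ 2 - 1)"
    unfolding a_def by (intro has_value_at_infinity_intros X)
  then have "a - 1 \<noteq> 0"
    by (rule has_value_at_infinity_nonzero) (use \<open>t ^ 2 \<noteq> 1\<close> in simp)
  then have "X \<noteq> varT"
    by (auto simp: a_def)
  moreover have "(Y - 1) / (X - varT) = L / varT"
    using \<open>a - 1 \<noteq> 0\<close> by (simp add: L_def a_def field_simps)
  ultimately have "ec_add E0_c 1 (Aff varT 1) (Aff X Y) = Aff X' Y'"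
    unfolding X'_def Y'_def by (intro ec_add_chord) auto
  have L: "has_value_at_infinity L ((t ^ 2 + t + 1) / (t + 1))"
    using has_value_at_infinity_divide[OF has_value_at_infinity_diff[OF Y has_value_at_infinity_one] a1]
      \<open>t ^ 2 \<noteq> 1\<close> chord_slope_identities(1)[OF assms(1,2)] by (simp add: L_def)
  define C :: "'k poly fract" where "C = E0_c / varT ^ 3"
  have "X' / varT = C * L ^ 2 - 1 - a"
    by (simp add: X'_def C_def a_def field_simps eval_nat_numeral)
  moreover have "has_value_at_infinity (C * L ^ 2 - 1 - a) (1 * ((t ^ 2 + t + 1) / (t + 1)) ^ 2 - 1 - t ^ 2)"
    unfolding C_def a_def by (intro has_value_at_infinity_intros E0_c_value_at_infinity L X)
  ultimately have X': "has_value_at_infinity (X' / varT) ((t / (t + 1)) ^ 2)"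
    using chord_slope_identities(2)[OF assms(1,2)] by simp
  have "Y' = L * (1 - X' / varT) - 1"
    by (simp add: Y'_def field_simps)
  moreover have "has_value_at_infinity (L * (1 - X' / varT) - 1)
      ((t ^ 2 + t + 1) / (t + 1) * (1 - (t / (t + 1)) ^ 2) - 1)"
    by (intro has_value_at_infinity_intros L X')
  ultimately have "has_value_at_infinity Y' ((t / (t + 1)) ^ 3)"
    using chord_slope_identities(3)[OF assms(1,2)] by simp
  with that \<open>ec_add E0_c 1 (Aff varT 1) (Aff X Y) = Aff X' Y'\<close> X' show ?thesis
    by blast
qed

definition E0_tangent_slope :: "'k::field poly fract" where
  "E0_tangent_slope = (3 * varT ^ 2 + 1) / (2 * E0_c)"

lemma E0_mult_2:
  defines "X \<equiv> E0_c * E0_tangent_slope ^ 2 - 2 * varT :: 'k::field_char_0 poly fract"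
  shows "E0_mult 2 = Aff X (E0_tangent_slope * (varT - X) - 1)"
proof -
  have "(1 :: 'k poly fract) \<noteq> - 1"
    by (simp add: eq_neg_iff_add_eq_0)
  then show ?thesis
    by (simp add: E0_mult_def numeral_2_eq_2 Let_def E0_tangent_slope_def X_def)
qed

lemma E0_mult_2_at_0:
  obtains X Y :: "'k::field_char_0 poly fract" where "E0_mult 2 = Aff X Y"
    and "has_value_at 0 X (of_rat (1/4))" and "has_value_at 0 Y (of_rat (-9/8))"
proof -
  define l :: "'k poly fract" where "l = E0_tangent_slope"
  have "has_value_at 0 l ((3 * 0 ^ 2 + 1) / (2 * 1))"
    unfolding l_def E0_tangent_slope_def by (intro has_value_at_intros E0_c_value_at_0) simp
  then have l: "has_value_at 0 l (1/2)"
    by simp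
  have "has_value_at 0 (E0_c * l ^ 2 - 2 * varT) (1 * (1/2) ^ 2 - 2 * 0)"
    by (intro has_value_at_intros E0_c_value_at_0 l)
  then have X: "has_value_at 0 (E0_c * l ^ 2 - 2 * varT) (of_rat (1/4))"
    by (simp add: of_rat_divide power2_eq_square)
  have "has_value_at 0 (l * (varT - (E0_c * l ^ 2 - 2 * varT)) - 1) (1/2 * (0 - of_rat (1/4)) - 1)"
    by (intro has_value_at_intros l X)
  then have "has_value_at 0 (l * (varT - (E0_c * l ^ 2 - 2 * varT)) - 1) (of_rat (-9/8))"
    by (simp add: of_rat_divide of_rat_minus)
  with X that show ?thesis
    using E0_mult_2 unfolding l_def by blast
qed

lemma E0_mult_2_at_infinity:
  obtains X Y :: "'k::field_char_0 poly fract" where "E0_mult 2 = Aff X Y"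
    and "has_value_at_infinity (X / varT) ((1/2) ^ 2)" and "has_value_at_infinity Y ((1/2) ^ 3)"
proof -
  define l :: "'k poly fract" where "l = E0_tangent_slope"
  define X where "X = E0_c * l ^ 2 - 2 * varT"
  define C :: "'k poly fract" where "C = E0_c / varT ^ 3"
  have "E0_c \<noteq> (0 :: 'k poly fract)"
    using E0_c_value_at_0 by (rule has_value_at_nonzero) simp
  then have "l * varT = (3 + inverse varT ^ 2) / (2 * C)"
    by (simp add: l_def E0_tangent_slope_def C_def field_simps eval_nat_numeral)
  moreover have "has_value_at_infinity ((3 + inverse varT ^ 2) / (2 * C)) ((3 + 0 ^ 2) / (2 * 1))"
    unfolding C_def by (intro has_value_at_infinity_intros E0_c_value_at_infinity) simp
  ultimately have lT: "has_value_at_infinity (l * varT) (3/2)"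
    by simp
  have "X / varT = C * (l * varT) ^ 2 - 2"
    by (simp add: X_def C_def field_simps eval_nat_numeral)
  moreover have "has_value_at_infinity (C * (l * varT) ^ 2 - 2) (1 * (3/2) ^ 2 - 2)"
    unfolding C_def by (intro has_value_at_infinity_intros E0_c_value_at_infinity lT)
  ultimately have XT: "has_value_at_infinity (X / varT) ((1/2) ^ 2)"
    by (simp add: power2_eq_square)
  have Y: "l * (varT - X) - 1 = (l * varT) * (1 - X / varT) - 1"
    by (simp add: field_simps)
  have "has_value_at_infinity ((l * varT) * (1 - X / varT) - 1) (3/2 * (1 - (1/2) ^ 2) - 1)"
    by (intro has_value_at_infinity_intros lT XT)
  then have "has_value_at_infinity (l * (varT - X) - 1) ((1/2) ^ 3)"
    unfolding Y by (simp add: power2_eq_square power3_eq_cube)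
  with XT that show ?thesis
    using E0_mult_2 unfolding l_def X_def by blast
qed

lemma E0_add_at_0:
  fixes X Y :: "'k::field_char_0 poly fract"
  assumes X: "has_value_at 0 X (of_rat x)" and Y: "has_value_at 0 Y (of_rat y)" and "x \<noteq> 0"
    and add: "ec_add 1 1 P0 (Aff x y) = Aff x' y'"
  obtains X' Y' where "ec_add E0_c 1 (Aff varT 1) (Aff X Y) = Aff X' Y'"
    and "has_value_at 0 X' (of_rat x')" and "has_value_at 0 Y' (of_rat y')"
proof -
  define l0 where "l0 = (y - 1) / x"
  have "Aff x' y' = Aff (l0 ^ 2 - x) (- l0 * (l0 ^ 2 - x) - 1)"
    by (rule P0_add_chord[OF \<open>x \<noteq> 0\<close> l0_def, unfolded add])
  then have x': "x' = l0 ^ 2 - x" and "y' = - l0 * (l0 ^ 2 - x) - 1"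
    by simp_all
  then have y': "y' = - l0 * x' - 1"
    by simp
  have "has_value_at 0 (X - varT) (of_rat x - 0)"
    by (intro has_value_at_intros X)
  then have "X - varT \<noteq> 0"
    by (rule has_value_at_nonzero) (use \<open>x \<noteq> 0\<close> in simp)
  define l where "l = (Y - 1) / (X - varT)"
  define X' where "X' = E0_c * l ^ 2 - varT - X"
  define Y' where "Y' = l * (varT - X') - 1"
  have "ec_add E0_c 1 (Aff varT 1) (Aff X Y) = Aff X' Y'"
    unfolding X'_def Y'_def l_def by (rule ec_add_chord) (use \<open>X - varT \<noteq> 0\<close> in auto)
  moreover have "has_value_at 0 l ((of_rat y - 1) / (of_rat x - 0))"
    unfolding l_def by (intro has_value_at_intros X Y) (use \<open>x \<noteq> 0\<close> in simp)
  then have l: "has_value_at 0 l (of_rat l0)"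
    by (simp add: l0_def of_rat_divide of_rat_diff)
  have "has_value_at 0 X' (1 * of_rat l0 ^ 2 - 0 - of_rat x)"
    unfolding X'_def by (intro has_value_at_intros E0_c_value_at_0 l X)
  then have X': "has_value_at 0 X' (of_rat x')"
    by (simp add: x' of_rat_diff of_rat_power)
  have "has_value_at 0 Y' (of_rat l0 * (0 - of_rat x') - 1)"
    unfolding Y'_def by (intro has_value_at_intros l X')
  then have "has_value_at 0 Y' (of_rat y')"
    by (simp add: y' of_rat_diff of_rat_mult of_rat_minus)
  ultimately show ?thesis
    using that X' by blast
qed

lemma E0_mult_at_0:
  assumes "n \<ge> 1"
  shows "\<exists>(X :: 'k::field_char_0 poly fract) Y x y. E0_mult n = Aff X Y \<and> P0_mult n = Aff x y \<and>
    has_value_at 0 X (of_rat x) \<and> has_value_at 0 Y (of_rat y)"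
  using assms
proof (induction n rule: nat_induct_at_least)
  case base
  show ?case
    using has_value_at_varT[of 0] has_value_at_one[of 0]
    by (simp add: E0_mult_def P0_mult_def P0_def)
next
  case (Suc n)
  show ?case
  proof (cases "n = 1")
    case True
    obtain X Y :: "'k poly fract" where "E0_mult 2 = Aff X Y"
      and "has_value_at 0 X (of_rat (1/4))" and "has_value_at 0 Y (of_rat (-9/8))"
      by (rule E0_mult_2_at_0)
    moreover have "Suc n = 2"
      using True by simp
    ultimately show ?thesis
      using P0_mult_2 by metis
  next
    case False
    with Suc.hyps have "n \<ge> 2"
      by simp
    then obtain x y where xy: "P0_mult n = Aff x y" and "x \<noteq> 0"
      by (rule P0_mult_Aff)
    obtain X Y :: "'k poly fract" where XY: "E0_mult n = Aff X Y"
      and "has_value_at 0 X (of_rat x)" and "has_value_at 0 Y (of_rat y)"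
      using Suc.IH xy by auto
    obtain x' y' where "ec_add 1 1 P0 (Aff x y) = Aff x' y'"
      using P0_add_chord[OF \<open>x \<noteq> 0\<close> refl] by blast
    then obtain X' Y' where "ec_add E0_c 1 (Aff varT 1) (Aff X Y) = Aff X' Y'"
      and "has_value_at 0 X' (of_rat x')" and "has_value_at 0 Y' (of_rat y')"
      by (rule E0_add_at_0[OF \<open>has_value_at 0 X _\<close> \<open>has_value_at 0 Y _\<close> \<open>x \<noteq> 0\<close>])
    then show ?thesis
      using XY xy \<open>ec_add 1 1 P0 (Aff x y) = _\<close> by (auto simp: E0_mult_Suc P0_mult_Suc)
  qed
qed

lemma E0_mult_at_infinity:
  assumes "n \<ge> 1"
  shows "\<exists>X :: 'k::field_char_0 poly fract. \<exists>Y. E0_mult n = Aff X Y \<and>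
    has_value_at_infinity (X / varT) ((1 / of_nat n) ^ 2) \<and> has_value_at_infinity Y ((1 / of_nat n) ^ 3)"
  using assms
proof (induction n rule: nat_induct_at_least)
  case base
  show ?case
    using has_value_at_infinity_one by (simp add: E0_mult_def)
next
  case (Suc n)
  show ?case
  proof (cases "n = 1")
    case True
    obtain X Y :: "'k poly fract" where "E0_mult 2 = Aff X Y"
      and "has_value_at_infinity (X / varT) ((1/2) ^ 2)" and "has_value_at_infinity Y ((1/2) ^ 3)"
      by (rule E0_mult_2_at_infinity)
    moreover have "Suc n = 2"
      using True by simp
    ultimately show ?thesis
      by (metis of_nat_numeral)
  next
    case False
    define t :: 'k where "t = 1 / of_nat n"
    from False Suc.hyps have "t \<noteq> 1" "t + 1 \<noteq> 0"
      using of_nat_neq_0[of n, where 'a='k] by (simp_all add: t_def field_simps)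
    obtain X Y :: "'k poly fract" where XY: "E0_mult n = Aff X Y"
      and X: "has_value_at_infinity (X / varT) (t ^ 2)" and Y: "has_value_at_infinity Y (t ^ 3)"
      using Suc.IH unfolding t_def by blast
    obtain X' Y' where "ec_add E0_c 1 (Aff varT 1) (Aff X Y) = Aff X' Y'"
      and "has_value_at_infinity (X' / varT) ((t / (t + 1)) ^ 2)"
      and "has_value_at_infinity Y' ((t / (t + 1)) ^ 3)"
      by (rule E0_add_at_infinity[OF \<open>t \<noteq> 1\<close> \<open>t + 1 \<noteq> 0\<close> X Y])
    moreover have "t / (t + 1) = 1 / of_nat (Suc n)"
      using Suc.hyps by (simp add: t_def field_simps)
    ultimately show ?thesis
      using XY by (auto simp: E0_mult_Suc)
  qed
qed

lemma Pm_of_nat: "Pm (int n) = E0_mult n"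
  and Pm_uminus_of_nat: "Pm (- int n) = ec_neg (E0_mult n)"
  by (simp_all add: Pm_def ec_mul_def E0_mult_def)

lemma psi_of_nat: "E0_mult n = Aff X Y \<Longrightarrow> psi (int n) = X / (varT * Y)"
  by (simp add: psi_def Pm_of_nat)

lemma psi_uminus: "psi (- m) = - (psi m :: 'k::field poly fract)"
proof -
  have "psi (- int n) = - (psi (int n) :: 'k poly fract)" for n
    by (cases "E0_mult n :: 'k poly fract ecpt") (simp_all add: psi_def Pm_of_nat Pm_uminus_of_nat)
  then show ?thesis
    by (cases m rule: int_cases2) (simp_all add: psi_def)
qed

lemma psi_at_infinity:
  assumes "m \<noteq> 0"
  shows "has_value_at_infinity (psi m :: 'k::field_char_0 poly fract) (of_int m)"
proof -
  have nat_case: "has_value_at_infinity (psi (int n) :: 'k poly fract) (of_nat n)" if "n \<ge> 1" for n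
  proof -
    obtain X Y :: "'k poly fract" where XY: "E0_mult n = Aff X Y"
      and "has_value_at_infinity (X / varT) ((1 / of_nat n) ^ 2)"
      and "has_value_at_infinity Y ((1 / of_nat n) ^ 3)"
      using E0_mult_at_infinity[OF \<open>n \<ge> 1\<close>] by blast
    then have "has_value_at_infinity (X / varT / Y) ((1 / of_nat n) ^ 2 / (1 / of_nat n) ^ 3)"
      using \<open>n \<ge> 1\<close> by (intro has_value_at_infinity_divide) simp_all
    then show ?thesis
      using \<open>n \<ge> 1\<close> by (simp add: psi_of_nat[OF XY] power2_eq_square power3_eq_cube)
  qed
  show ?thesis
  proof (cases m rule: int_cases2)
    case (nonneg n)
    with assms nat_case[of n] show ?thesis
      by simp
  next
    case (nonpos n)
    with assms has_value_at_infinity_uminus[OF nat_case[of n]] show ?thesis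
      by (simp add: psi_uminus)
  qed
qed

lemma varT_psi_at_0:
  assumes "m \<notin> {0, 1, -1}"
  obtains w where "has_value_at 0 (varT * psi m :: 'k::field_char_0 poly fract) w" and "w \<noteq> 0"
proof -
  have nat_case: "\<exists>w. has_value_at 0 (varT * psi (int n) :: 'k poly fract) w \<and> w \<noteq> 0"
    if "n \<ge> 2" for n
  proof -
    from \<open>n \<ge> 2\<close> have "n \<ge> 1"
      by simp
    then obtain X Y :: "'k poly fract" and x y where XY: "E0_mult n = Aff X Y"
      and xy: "P0_mult n = Aff x y"
      and "has_value_at 0 X (of_rat x)" and "has_value_at 0 Y (of_rat y)"
      using E0_mult_at_0 by blast
    moreover have "x \<noteq> 0" "y \<noteq> 0"
      using P0_mult_Aff[OF \<open>n \<ge> 2\<close>] xy by auto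
    ultimately have "has_value_at 0 (X / Y) (of_rat x / of_rat y)"
      by (intro has_value_at_divide) simp_all
    moreover have "varT * psi (int n) = X / Y"
      by (simp add: psi_of_nat[OF XY])
    ultimately show ?thesis
      using \<open>x \<noteq> 0\<close> \<open>y \<noteq> 0\<close> by auto
  qed
  show ?thesis
  proof (cases m rule: int_cases2)
    case (nonneg n)
    with assms nat_case[of n] that show ?thesis
      by auto
  next
    case (nonpos n)
    with assms nat_case[of n] that show ?thesis
      by (auto simp: psi_uminus dest: has_value_at_uminus)
  qed
qed

section \<open>Orders of \<open>u\<close> and \<open>v\<close>\<close>

lemma ord_T_mult_diff_add_divide_varT:
  fixes a b r c :: "'k::field poly fract"
  assumes "has_value_at 0 (varT * a) \<alpha>" and "\<alpha> \<noteq> 0"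
    and "has_value_at 0 (varT * b) \<beta>" and "\<beta> \<noteq> 0"
    and "has_value_at 0 (varT * r) \<rho>" and "has_value_at 0 c \<gamma>"
  shows "ord_T (a * b - r + c / varT) = -2"
proof -
  have "a * b - r + c / varT = ((varT * a) * (varT * b) - varT * (varT * r) + varT * c) / varT ^ 2"
    by (simp add: field_simps power2_eq_square)
  moreover have "has_value_at 0 ((varT * a) * (varT * b) - varT * (varT * r) + varT * c)
      (\<alpha> * \<beta> - 0 * \<rho> + 0 * \<gamma>)"
    by (intro has_value_at_intros assms)
  ultimately show ?thesis
    using assms ord_T_divide_varT_power[of _ "\<alpha> * \<beta>" 2] by simp
qed

lemma ord_Tinv_add_divide_varT_eq_0:
  assumes "has_value_at_infinity d \<delta>" and "\<delta> \<noteq> 0" and "has_value_at_infinity c \<gamma>"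
  shows "ord_Tinv (d + c / varT) = 0"
proof -
  have "has_value_at_infinity (d + c * inverse varT) (\<delta> + \<gamma> * 0)"
    by (intro has_value_at_infinity_intros assms)
  then show ?thesis
    using assms(2) ord_Tinv_divide_varT_power[of _ \<delta> 0] by (simp add: divide_inverse)
qed

lemma ord_Tinv_add_divide_varT_eq_1:
  assumes "has_value_at_infinity d 0"
    and "has_value_at_infinity c \<gamma>" and "has_value_at_infinity c' \<gamma>'" and "\<gamma> \<noteq> \<gamma>'"
  shows "ord_Tinv (d + c / varT) = 1 \<or> ord_Tinv (d + c' / varT) = 1"
proof -
  obtain w where w: "has_value_at_infinity (varT * d) w"
    using assms(1) by (rule has_value_at_infinity_varT_mult)
  have simple_zero: "ord_Tinv (d + e / varT) = 1" if "has_value_at_infinity e \<epsilon>" "w + \<epsilon> \<noteq> 0" for e \<epsilon>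
  proof -
    have "d + e / varT = (varT * d + e) / varT ^ 1"
      by (simp add: field_simps)
    moreover have "has_value_at_infinity (varT * d + e) (w + \<epsilon>)"
      by (intro has_value_at_infinity_intros w that(1))
    ultimately show ?thesis
      using ord_Tinv_divide_varT_power[of "varT * d + e" "w + \<epsilon>" 1] that(2) by simp
  qed
  from assms(4) have "w + \<gamma> \<noteq> 0 \<or> w + \<gamma>' \<noteq> 0"
    by (metis add_left_cancel)
  then show ?thesis
    using simple_zero assms(2,3) by blast
qed

lemma ord_T_psi_combination:
  assumes "m \<notin> {0, 1, -1}" and "n \<notin> {0, 1, -1}" and "r \<notin> {0, 1, -1}"
    and "has_value_at 0 c \<gamma>"
  shows "ord_T (psi m * psi n - psi r + c / varT :: 'k::field_char_0 poly fract) = -2"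
proof -
  obtain \<alpha> \<beta> \<rho> where
    "has_value_at 0 (varT * psi m :: 'k poly fract) \<alpha>" "\<alpha> \<noteq> 0"
    "has_value_at 0 (varT * psi n :: 'k poly fract) \<beta>" "\<beta> \<noteq> 0"
    "has_value_at 0 (varT * psi r :: 'k poly fract) \<rho>"
    using varT_psi_at_0[OF assms(1)] varT_psi_at_0[OF assms(2)] varT_psi_at_0[OF assms(3)]
    by metis
  then show ?thesis
    using assms(4) by (rule ord_T_mult_diff_add_divide_varT)
qed

lemma psi_combination_at_infinity:
  assumes "m \<noteq> 0" and "n \<noteq> 0" and "r \<noteq> 0"
  shows "has_value_at_infinity (psi m * psi n - psi r :: 'k::field_char_0 poly fract)
    (of_int (n * m - r))"
proof -
  have "has_value_at_infinity (psi m * psi n - psi r :: 'k poly fract)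
      (of_int m * of_int n - of_int r)"
    using assms by (intro has_value_at_infinity_intros psi_at_infinity)
  then show ?thesis
    by (simp add: mult.commute)
qed

theorem lemma4p3:
  fixes m n r :: int
  assumes "m \<notin> {0, 1, -1}" and "n \<notin> {0, 1, -1}" and "r \<notin> {0, 1, -1}"
  defines "u \<equiv> (psi m * psi n - psi r + (1/2) / varT :: 'k::field_char_0 poly fract)"
      and "v \<equiv> (psi m * psi n - psi r + (1/3) / varT :: 'k::field_char_0 poly fract)"
  shows "ord_T u = -2 \<and> ord_T v = -2 \<and>
         (n * m = r \<longleftrightarrow> (ord_Tinv u = 1 \<or> ord_Tinv v = 1)) \<and>
         (n * m \<noteq> r \<longleftrightarrow> (ord_Tinv u = 0 \<and> ord_Tinv v = 0))"
proof -
  have at_0: "has_value_at 0 (1/2 :: 'k poly fract) (1/2)" "has_value_at 0 (1/3 :: 'k poly fract) (1/3)"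
    by (intro has_value_at_intros; simp)+
  have at_infinity: "has_value_at_infinity (1/2 :: 'k poly fract) (1/2)"
    "has_value_at_infinity (1/3 :: 'k poly fract) (1/3)"
    by (intro has_value_at_infinity_intros; simp)+
  have "ord_T u = -2" "ord_T v = -2"
    unfolding u_def v_def using ord_T_psi_combination[OF assms(1-3)] at_0 by blast+
  have D: "has_value_at_infinity (psi m * psi n - psi r :: 'k poly fract) (of_int (n * m - r))"
    using assms(1-3) by (intro psi_combination_at_infinity) auto
  have "ord_Tinv u = 1 \<or> ord_Tinv v = 1" if "n * m = r"
  proof -
    from D that have "has_value_at_infinity (psi m * psi n - psi r :: 'k poly fract) 0"
      by simp
    from ord_Tinv_add_divide_varT_eq_1[OF this at_infinity] show ?thesis
      by (simp add: u_def v_def)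
  qed
  moreover have "ord_Tinv u = 0 \<and> ord_Tinv v = 0" if "n * m \<noteq> r"
  proof -
    from that have "of_int (n * m - r) \<noteq> (0 :: 'k)"
      by (subst of_int_eq_0_iff) simp
    with D at_infinity show ?thesis
      unfolding u_def v_def by (blast intro: ord_Tinv_add_divide_varT_eq_0)
  qed
  ultimately show ?thesis
    using \<open>ord_T u = -2\<close> \<open>ord_T v = -2\<close> by (cases "n * m = r") auto
qed

end
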